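(* Let $\kappa, m, n$ be positive integers such that $\kappa^4 m^4 n^4 - 32\kappa(m^2+n^2) = s^2$ for some integer $s$. Then \[ (\kappa m^2 - 2)(\kappa n^2 - 2) \leq 8. \] *)

theory Defs
  imports Main
begin

end

theory Submission imports Defs "HOL-Computational_Algebra.Primes" begin

text \<open>Write \<open>A = (\<kappa> m n)\<^sup>2\<close> and \<open>X = \<kappa> (m\<^sup>2 + n\<^sup>2)\<close>, so that the hypothesis reads
  \<open>A\<^sup>2 - 32 X = s\<^sup>2\<close> and the claim is \<open>A - 2 X + 4 \<le> 8\<close>. Factoring
  \<open>(A - |s|) (A + |s|) = 32 X\<close> gives \<open>e (A - e) = 8 X\<close> with \<open>0 < e \<le> A / 2\<close>.
  The cases \<open>e = 1, 2, 3\<close> are impossible: \<open>e = 1\<close> forces \<open>\<kappa> = 1\<close> and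
  \<open>m\<^sup>2 n\<^sup>2 - 1 = 8 (m\<^sup>2 + n\<^sup>2)\<close>, which fails modulo 5, while \<open>e = 2, 3\<close> would make
  the square \<open>A\<close> congruent to 2 modulo 4, resp. to 3 modulo 8. For \<open>e \<ge> 4\<close> the claim is
  \<open>(e - 4) (A - e - 4) \<ge> 0\<close>.\<close>

lemma square_mod_5: "(x::int)^2 mod 5 \<in> {0, 1, 4}"
proof -
  have "x mod 5 \<in> {0, 1, 2, 3, 4}" by auto
  moreover have "x^2 mod 5 = (x mod 5)^2 mod 5" by (simp add: power_mod)
  ultimately show ?thesis by auto
qed

lemma square_mod_8: "(x::int)^2 mod 8 \<in> {0, 1, 4}"
proof -
  have "x mod 8 \<in> {0, 1, 2, 3, 4, 5, 6, 7}" by auto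
  moreover have "x^2 mod 8 = (x mod 8)^2 mod 8" by (simp add: power_mod)
  ultimately show ?thesis by auto
qed

lemma five_not_dvd_square_plus_2: "\<not> 5 dvd (x::int)^2 + 2"
proof -
  have "x^2 mod 5 = 0 \<or> x^2 mod 5 = 1 \<or> x^2 mod 5 = 4" using square_mod_5[of x] by simp
  then show ?thesis by presburger
qed

lemma square_mult_square_minus_1_ne: "(x::int)^2 * y^2 - 1 \<noteq> 8 * (x^2 + y^2)"
proof
  assume eq: "x^2 * y^2 - 1 = 8 * (x^2 + y^2)"
  have "(x^2 + 2) * (y^2 + 2) = 5 * (2 * (x^2 + y^2) + 1)"
    using eq by (simp add: algebra_simps)
  then have "5 dvd (x^2 + 2) * (y^2 + 2)" by simp
  then have "5 dvd x^2 + 2 \<or> 5 dvd y^2 + 2" by (simp add: prime_dvd_mult_iff)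
  then show False using five_not_dvd_square_plus_2 by blast
qed

lemma scaled_square_mult_square_minus_1_ne:
  fixes \<kappa> x y :: int
  assumes "\<kappa> > 0"
  shows "(\<kappa> * x * y)^2 - 1 \<noteq> 8 * \<kappa> * (x^2 + y^2)"
proof
  assume eq: "(\<kappa> * x * y)^2 - 1 = 8 * \<kappa> * (x^2 + y^2)"
  then have "1 = \<kappa> * (\<kappa> * x^2 * y^2 - 8 * (x^2 + y^2))"
    by (simp add: algebra_simps power_mult_distrib power2_eq_square)
  then have "\<kappa> dvd 1" by (metis dvd_triv_left)
  with assms have "\<kappa> = 1" by simp
  with eq square_mult_square_minus_1_ne[of x y] show False
    by (simp add: power_mult_distrib)
qed

lemma eight_not_dvd_mult_square_minus:
  assumes "e \<in> {2, 3}"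
  shows "\<not> 8 dvd e * ((x::int)^2 - e)"
proof -
  have "x^2 mod 8 = 0 \<or> x^2 mod 8 = 1 \<or> x^2 mod 8 = 4" using square_mod_8[of x] by simp
  then have "\<not> 8 dvd 2 * (x^2 - 2)" and "\<not> 8 dvd 3 * (x^2 - 3)" by presburger+
  with assms show ?thesis by auto
qed

lemma difference_of_squares_split:
  fixes A t N :: int
  assumes "A^2 - 4 * N = t^2" and "N > 0" and "A \<ge> 0"
  obtains e where "e > 0" and "2 * e \<le> A" and "e * (A - e) = N"
proof -
  define u where "u = \<bar>t\<bar>"
  have "u^2 < A^2" using assms(1,2) unfolding u_def by simp
  then have "u < A" using assms(3) power_less_imp_less_base by blast
  have prod: "(A - u) * (A + u) = 4 * N"
    using assms(1) unfolding u_def by (simp add: algebra_simps power2_eq_square)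
  have "even ((A - u) * (A + u))" by (simp add: prod)
  then have "even (A - u)" by (simp add: even_mult_iff)
  then obtain e where e: "A - u = 2 * e" by (metis evenE)
  show thesis
  proof
    show "e > 0" using \<open>u < A\<close> e by linarith
    show "2 * e \<le> A" using e unfolding u_def by linarith
    have "(2 * e) * (2 * (A - e)) = 4 * N" using prod e by (simp add: algebra_simps)
    then have "4 * (e * (A - e)) = 4 * N" by (simp add: algebra_simps)
    then show "e * (A - e) = N" by simp
  qed
qed

lemma mult_complement_lower_bound:
  fixes e A :: "'a :: linordered_idom"
  assumes "4 \<le> e" and "2 * e \<le> A"
  shows "4 * (A - 4) \<le> e * (A - e)"
proof -
  have "0 \<le> (e - 4) * (A - e - 4)"
    using assms by (intro mult_nonneg_nonneg) simp_all
  also have "\<dots> = e * (A - e) - 4 * (A - 4)" by (simp add: algebra_simps)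
  finally show ?thesis by simp
qed

theorem lemma3:
  fixes \<kappa> m n s :: int
  assumes "\<kappa> > 0" and "m > 0" and "n > 0"
    and "\<kappa>^4 * m^4 * n^4 - 32 * \<kappa> * (m^2 + n^2) = s^2"
  shows "(\<kappa> * m^2 - 2) * (\<kappa> * n^2 - 2) \<le> 8"
proof -
  define p where "p = \<kappa> * m * n"
  define X where "X = \<kappa> * (m^2 + n^2)"
  have "X > 0" unfolding X_def using assms(1-3) by (simp add: add_pos_pos)
  have "(p^2)^2 - 4 * (8 * X) = s^2"
    using assms(4) unfolding p_def X_def by (simp add: algebra_simps power_mult_distrib flip: power_mult)
  moreover have "8 * X > 0" using \<open>X > 0\<close> by simp
  ultimately obtain e where "e > 0" and "2 * e \<le> p^2" and key: "e * (p^2 - e) = 8 * X"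
    using difference_of_squares_split zero_le_power2 by blast
  have "e \<noteq> 1"
    using key scaled_square_mult_square_minus_1_ne[OF assms(1), of m n]
    unfolding p_def X_def by (auto simp: algebra_simps)
  moreover have "e \<notin> {2, 3}"
    using eight_not_dvd_mult_square_minus[of e p] key by (metis dvd_triv_left)
  ultimately have "e \<ge> 4" using \<open>e > 0\<close> by auto
  then have "4 * (p^2 - 4) \<le> 8 * X"
    using mult_complement_lower_bound \<open>2 * e \<le> p^2\<close> key by metis
  have "(\<kappa> * m^2 - 2) * (\<kappa> * n^2 - 2) = p^2 - 2 * X + 4"
    unfolding p_def X_def by (simp add: algebra_simps power_mult_distrib power2_eq_square)
  also have "\<dots> \<le> 8" using \<open>4 * (p^2 - 4) \<le> 8 * X\<close> by presburger
  finally show ?thesis .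
qed

end
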